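(* Let $d, N$ be positive integers and $r \ge 2$ an integer, let $\|\cdot\|$ be any norm on $\mathbb{R}^d$ with unit ball $B = \{v \in \mathbb{R}^d : \|v\| \le 1\}$, and let $V_1, \dots, V_N$ be finite subsets of $B$ with $|V_i| \ge r$ for all $i \in [N]$. Then for every $k \in [r]$ there are subsets $U_i \subseteq V_i$, $i \in [N]$, with $|U_i| = k$ for all $i$, such that \[ \max_{n \in [N]} \Big\| \sum_{i \in [n]} \Big( \sum_{v \in U_i} v - \frac{k}{|V_i|} \sum_{v \in V_i} v \Big) \Big\| \le 2d. \]
   Context: $[n] = \{1, \dots, n\}$. *)

theory Defs
  imports "HOL-Analysis.Analysis"
begin

definition is_norm :: "('a::real_vector \<Rightarrow> real) \<Rightarrow> bool" where
  "is_norm nrm \<longleftrightarrow>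
     (\<forall>x. 0 \<le> nrm x) \<and>
     (\<forall>x. nrm x = 0 \<longleftrightarrow> x = 0) \<and>
     (\<forall>c x. nrm (c *\<^sub>R x) = \<bar>c\<bar> * nrm x) \<and>
     (\<forall>x y. nrm (x + y) \<le> nrm x + nrm y)"

end

(*
  Give the pair (i, v), v in V_i, the fractional weight c(i, v) = k / |V_i| and round these
  weights to 0 or 1 set by set. At stage n only weights of the first n sets change, and every
  block sum as well as the vector sum over the first n sets stays fixed: while more than 2d of
  these weights are fractional, the d conditions on the vector sum and one condition for each
  block containing a fractional weight (such a block contains at least two, its sum being an
  integer) leave a nonzero admissible direction supported on the fractional weights, and moving
  along it until some weight reaches 0 or 1 makes one more weight integral. Integral weights are
  never changed again, so the final 0/1 weights differ from those of stage n in at most 2d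
  weights of the first n sets, each multiplying a vector of norm at most 1. Since the stage-n
  weights have the same vector sum over the first n sets as c, the n-th prefix sum has norm at
  most 2d.
*)

theory Submission
  imports Defs
begin

lemma is_norm_zero: "is_norm nrm \<Longrightarrow> nrm 0 = 0"
  unfolding is_norm_def by blast

lemma is_norm_scaleR: "is_norm nrm \<Longrightarrow> nrm (c *\<^sub>R x) = \<bar>c\<bar> * nrm x"
  unfolding is_norm_def by blast

lemma is_norm_sum_le:
  assumes "is_norm nrm"
  shows "nrm (\<Sum>s\<in>A. f s) \<le> (\<Sum>s\<in>A. nrm (f s))"
proof (induction A rule: infinite_finite_induct)
  case (insert s A)
  have "nrm (f s + sum f A) \<le> nrm (f s) + nrm (sum f A)"
    using assms unfolding is_norm_def by blast
  with insert show ?case by simp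
qed (simp_all add: is_norm_zero[OF assms])

section \<open>Linear dependences with zero block sums\<close>

lemma sum_of_bool_eq_scaleR:
  fixes \<phi> :: "'i \<Rightarrow> 'a::real_vector"
  assumes "finite A"
  shows "(\<Sum>s\<in>A. of_bool (s = r) *\<^sub>R \<phi> s) = (if r \<in> A then \<phi> r else 0)"
proof -
  have "(\<Sum>s\<in>A. of_bool (s = r) *\<^sub>R \<phi> s) = (\<Sum>s\<in>A. if s = r then \<phi> r else 0)"
    by (intro sum.cong) auto
  with assms show ?thesis
    by (simp add: sum.delta')
qed

lemma family_dependent_if_dim_less_card:
  fixes h :: "'i \<Rightarrow> 'a::euclidean_space"
  assumes fin: "finite T" and span: "h ` T \<subseteq> span W" and card: "dim W < card T"
  shows "\<exists>a. (\<exists>t\<in>T. a t \<noteq> 0) \<and> (\<Sum>t\<in>T. a t *\<^sub>R h t) = 0"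
proof (cases "inj_on h T")
  case False
  then obtain t1 t2 where t: "t1 \<in> T" "t2 \<in> T" "t1 \<noteq> t2" "h t1 = h t2"
    unfolding inj_on_def by blast
  define a :: "'i \<Rightarrow> real" where "a t = of_bool (t = t1) - of_bool (t = t2)" for t
  have "(\<Sum>t\<in>T. a t *\<^sub>R h t) = h t1 - h t2"
    using t fin by (simp add: a_def scaleR_diff_left sum_subtractf sum_of_bool_eq_scaleR)
  with t show ?thesis
    by (intro exI[of _ a]) (auto simp: a_def)
next
  case True
  have "dependent (h ` T)"
  proof (rule ccontr)
    assume "independent (h ` T)"
    then have "card (h ` T) \<le> dim (span W)"
      using span by (intro independent_card_le_dim)
    with card True show False
      by (simp add: card_image)
  qed
  then obtain u where u: "\<exists>w\<in>h ` T. u w \<noteq> 0" "(\<Sum>w\<in>h ` T. u w *\<^sub>R w) = 0"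
    using fin by (auto simp: dependent_finite)
  with True show ?thesis
    by (intro exI[of _ "u \<circ> h"]) (auto simp: sum.reindex)
qed

lemma sum_scaleR_combination_of_deltas:
  fixes \<phi> :: "'i \<Rightarrow> 'b::real_vector"
  assumes "finite A"
  shows "(\<Sum>s\<in>A. (\<Sum>t\<in>T. a t * (of_bool (s = t) - of_bool (s = q t))) *\<^sub>R \<phi> s)
       = (\<Sum>t\<in>T. a t *\<^sub>R ((if t \<in> A then \<phi> t else 0) - (if q t \<in> A then \<phi> (q t) else 0)))"
proof -
  have delta: "(\<Sum>s\<in>A. (c * of_bool (s = r)) *\<^sub>R \<phi> s) = c *\<^sub>R (if r \<in> A then \<phi> r else 0)"
    for c r
    using sum_of_bool_eq_scaleR[OF assms, of r "\<lambda>s. c *\<^sub>R \<phi> s"] by (simp add: mult.commute)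
  have inner: "(\<Sum>s\<in>A. (a t * (of_bool (s = t) - of_bool (s = q t))) *\<^sub>R \<phi> s)
      = a t *\<^sub>R ((if t \<in> A then \<phi> t else 0) - (if q t \<in> A then \<phi> (q t) else 0))" for t
    by (simp only: right_diff_distrib scaleR_diff_left sum_subtractf delta scaleR_diff_right)
  show ?thesis
    unfolding scaleR_sum_left by (subst sum.swap) (simp only: inner)
qed

lemma exists_block_representatives:
  assumes fin: "finite F" and partner: "\<And>s. s \<in> F \<Longrightarrow> \<exists>s'\<in>F. s' \<noteq> s \<and> b s' = b s"
  shows "\<exists>p. (\<forall>s\<in>F. p (b s) \<in> F \<and> b (p (b s)) = b s) \<and> card F \<le> 2 * card (F - p ` b ` F)"
proof -
  define p where "p j = (SOME s. s \<in> F \<and> b s = j)" for j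
  have p: "p (b s) \<in> F \<and> b (p (b s)) = b s" if "s \<in> F" for s
    unfolding p_def by (rule someI_ex) (use that in blast)
  define q where "q j = (SOME s. s \<in> F \<and> s \<noteq> p j \<and> b s = j)" for j
  have q: "q (b s) \<in> F \<and> q (b s) \<noteq> p (b s) \<and> b (q (b s)) = b s" if "s \<in> F" for s
    unfolding q_def by (rule someI_ex) (use partner[of "p (b s)"] p[OF that] in auto)
  let ?P = "p ` b ` F"
  have "card (b ` F) \<le> card (F - ?P)"
  proof (rule card_inj_on_le)
    show "inj_on q (b ` F)"
      by (rule inj_on_inverseI[where g = b]) (use q in auto)
    show "q ` b ` F \<subseteq> F - ?P"
      using p q by fastforce
  qed (use fin in simp)
  moreover have "card F \<le> card (F - ?P) + card ?P"
    using card_Un_le[of "F - ?P" ?P] card_mono[of "(F - ?P) \<union> ?P" F] fin by auto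
  moreover have "card ?P \<le> card (b ` F)"
    by (rule card_image_le) (use fin in simp)
  ultimately show ?thesis
    using p by (intro exI[of _ p]) auto
qed

lemma block_balanced_dependence:
  fixes g :: "'i \<Rightarrow> 'a::euclidean_space" and b :: "'i \<Rightarrow> 'j"
  assumes fin: "finite F" and many: "2 * dim (g ` F) < card F"
    and partner: "\<And>s. s \<in> F \<Longrightarrow> \<exists>s'\<in>F. s' \<noteq> s \<and> b s' = b s"
  shows "\<exists>z. (\<forall>s. s \<notin> F \<longrightarrow> z s = 0) \<and> (\<exists>s\<in>F. z s \<noteq> 0) \<and>
             (\<forall>j. (\<Sum>s\<in>{s\<in>F. b s = j}. z s) = 0) \<and> (\<Sum>s\<in>F. z s *\<^sub>R g s) = 0"
proof -
  obtain p where p: "\<forall>s\<in>F. p (b s) \<in> F \<and> b (p (b s)) = b s"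
    and half: "card F \<le> 2 * card (F - p ` b ` F)"
    using exists_block_representatives[OF fin partner] by blast
  define T where "T = F - p ` b ` F"
  have "finite T" "dim (g ` F) < card T"
    using fin many half by (auto simp: T_def)
  moreover have "(\<lambda>t. g t - g (p (b t))) ` T \<subseteq> span (g ` F)"
    using p by (auto simp: T_def intro: span_diff span_base)
  ultimately obtain a where a: "\<exists>t\<in>T. a t \<noteq> 0" "(\<Sum>t\<in>T. a t *\<^sub>R (g t - g (p (b t)))) = 0"
    using family_dependent_if_dim_less_card[of T "\<lambda>t. g t - g (p (b t))" "g ` F"] by blast
  \<comment> \<open>every difference of two unit vectors in the same block has zero block sums\<close>
  define z where "z s = (\<Sum>t\<in>T. a t * (of_bool (s = t) - of_bool (s = p (b t))))" for s
  show ?thesis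
  proof (intro exI[of _ z] conjI allI impI)
    show "z s = 0" if "s \<notin> F" for s
      unfolding z_def using that p by (intro sum.neutral) (auto simp: T_def)
    obtain t0 where t0: "t0 \<in> T" "a t0 \<noteq> 0"
      using a(1) by blast
    have "z t0 = (\<Sum>t\<in>T. of_bool (t = t0) *\<^sub>R a t)"
      unfolding z_def using t0(1) by (intro sum.cong) (auto simp: T_def)
    with t0 fin show "\<exists>s\<in>F. z s \<noteq> 0"
      by (intro bexI[of _ t0]) (auto simp: sum_of_bool_eq_scaleR T_def)
    show "(\<Sum>s\<in>{s\<in>F. b s = j}. z s) = 0" for j
      using sum_scaleR_combination_of_deltas[of "{s\<in>F. b s = j}" a "p \<circ> b" T "\<lambda>_. 1::real"] fin p
      by (simp add: z_def T_def)
    have "(\<Sum>s\<in>F. z s *\<^sub>R g s) = (\<Sum>t\<in>T. a t *\<^sub>R (g t - g (p (b t))))"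
      unfolding z_def sum_scaleR_combination_of_deltas[OF fin] using p
      by (intro sum.cong) (auto simp: T_def)
    with a(2) show "(\<Sum>s\<in>F. z s *\<^sub>R g s) = 0"
      by simp
  qed
qed

section \<open>Iterated rounding\<close>

lemma fractional_coord_has_partner:
  fixes x :: "'i \<Rightarrow> real"
  assumes fin: "finite S" and int: "(\<Sum>t\<in>{t\<in>S. b t = b s}. x t) \<in> \<int>"
    and s: "s \<in> S" "0 < x s" "x s < 1"
  shows "\<exists>s'\<in>S. s' \<noteq> s \<and> b s' = b s \<and> x s' \<notin> {0,1}"
proof (rule ccontr)
  assume "\<not> ?thesis"
  then have "(\<Sum>t\<in>{t\<in>S. b t = b s} - {s}. x t) \<in> \<int>"
    by (intro Ints_sum) auto
  moreover have "(\<Sum>t\<in>{t\<in>S. b t = b s}. x t) = x s + (\<Sum>t\<in>{t\<in>S. b t = b s} - {s}. x t)"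
    using fin s by (intro sum.remove) auto
  ultimately have "x s \<in> \<int>"
    using int by (metis Ints_diff add_diff_cancel_right')
  with s show False
    by (auto elim!: Ints_cases)
qed

lemma exists_step_to_cube_boundary:
  fixes x z :: "'i \<Rightarrow> real"
  assumes fin: "finite Z" and ne: "Z \<noteq> {}"
    and x: "\<And>s. s \<in> Z \<Longrightarrow> 0 < x s \<and> x s < 1" and z: "\<And>s. s \<in> Z \<Longrightarrow> z s \<noteq> 0"
  shows "\<exists>\<tau>. (\<forall>s\<in>Z. 0 \<le> x s + \<tau> * z s \<and> x s + \<tau> * z s \<le> 1) \<and> (\<exists>s\<in>Z. x s + \<tau> * z s \<in> {0,1})"
proof -
  define hit where "hit s = (if z s > 0 then (1 - x s) / z s else - x s / z s)" for s
  define \<tau> where "\<tau> = Min (hit ` Z)"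
  have "\<tau> \<in> hit ` Z"
    using fin ne by (simp add: \<tau>_def)
  then obtain s0 where s0: "s0 \<in> Z" "hit s0 = \<tau>"
    by blast
  have "0 < hit s" if "s \<in> Z" for s
    using x[OF that] z[OF that] by (auto simp: hit_def field_simps)
  with s0 have "0 \<le> \<tau>"
    by force
  have "0 \<le> x s + \<tau> * z s \<and> x s + \<tau> * z s \<le> 1" if s: "s \<in> Z" for s
  proof -
    have "\<tau> \<le> hit s"
      using fin s by (simp add: \<tau>_def)
    then consider "0 < z s" "\<tau> * z s \<le> 1 - x s" | "z s < 0" "- x s \<le> \<tau> * z s"
      using z[OF s] by (fastforce simp: hit_def field_simps split: if_splits)
    then show ?thesis
      using x[OF s] \<open>0 \<le> \<tau>\<close> mult_nonneg_nonpos[of \<tau> "z s"] mult_nonneg_nonneg[of \<tau> "z s"]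
      by cases auto
  qed
  moreover have "x s0 + \<tau> * z s0 \<in> {0,1}"
    using s0 z[OF s0(1)] by (auto simp: hit_def)
  ultimately show ?thesis
    using s0(1) by blast
qed

definition keeps_integral_coords :: "('i \<Rightarrow> real) \<Rightarrow> ('i \<Rightarrow> real) \<Rightarrow> bool" where
  "keeps_integral_coords x y \<longleftrightarrow> (\<forall>s. x s \<in> {0,1} \<longrightarrow> y s = x s)"

lemma keeps_integral_coords_trans:
  "keeps_integral_coords x y \<Longrightarrow> keeps_integral_coords y z \<Longrightarrow> keeps_integral_coords x z"
  unfolding keeps_integral_coords_def by metis

definition partial_rounding ::
    "'i set \<Rightarrow> ('i \<Rightarrow> 'j) \<Rightarrow> ('i \<Rightarrow> 'a::real_vector) \<Rightarrow> ('i \<Rightarrow> real) \<Rightarrow> ('i \<Rightarrow> real) \<Rightarrow> bool" where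
  "partial_rounding S b g x y \<longleftrightarrow>
     (\<forall>s\<in>S. 0 \<le> y s \<and> y s \<le> 1) \<and> keeps_integral_coords x y \<and> (\<forall>s. s \<notin> S \<longrightarrow> y s = x s) \<and>
     (\<forall>j. (\<Sum>s\<in>{s\<in>S. b s = j}. y s) = (\<Sum>s\<in>{s\<in>S. b s = j}. x s)) \<and>
     (\<Sum>s\<in>S. y s *\<^sub>R g s) = (\<Sum>s\<in>S. x s *\<^sub>R g s)"

lemma partial_rounding_refl:
  "\<forall>s\<in>S. 0 \<le> x s \<and> x s \<le> 1 \<Longrightarrow> partial_rounding S b g x x"
  by (simp add: partial_rounding_def keeps_integral_coords_def)

lemma partial_rounding_trans:
  "partial_rounding S b g x y \<Longrightarrow> partial_rounding S b g y z \<Longrightarrow> partial_rounding S b g x z"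
  unfolding partial_rounding_def using keeps_integral_coords_trans by metis

lemma balanced_direction_in_fractional_coords:
  fixes g :: "'i \<Rightarrow> 'a::euclidean_space" and b :: "'i \<Rightarrow> 'j" and x :: "'i \<Rightarrow> real"
  assumes fin: "finite S" and x01: "\<forall>s\<in>S. 0 \<le> x s \<and> x s \<le> 1"
    and int: "\<forall>j. (\<Sum>s\<in>{s\<in>S. b s = j}. x s) \<in> \<int>"
    and many: "2 * dim (g ` S) < card {s\<in>S. x s \<notin> {0,1}}"
  shows "\<exists>z. (\<forall>s. z s \<noteq> 0 \<longrightarrow> s \<in> S \<and> 0 < x s \<and> x s < 1) \<and> (\<exists>s. z s \<noteq> 0) \<and>
             (\<forall>j. (\<Sum>s\<in>{s\<in>S. b s = j}. z s) = 0) \<and> (\<Sum>s\<in>S. z s *\<^sub>R g s) = 0"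
proof -
  define F where "F = {s\<in>S. x s \<notin> {0,1}}"
  have F: "finite F" "F \<subseteq> S"
    using fin by (auto simp: F_def)
  have frac: "0 < x s \<and> x s < 1" if "s \<in> F" for s
    using that x01 by (force simp: F_def)
  have "dim (g ` F) \<le> dim (g ` S)"
    using F(2) by (intro dim_subset image_mono)
  with many have "2 * dim (g ` F) < card F"
    by (simp add: F_def)
  moreover have "\<exists>s'\<in>F. s' \<noteq> s \<and> b s' = b s" if "s \<in> F" for s
    using fractional_coord_has_partner[where S = S and b = b and x = x and s = s] fin int frac[OF that] F(2) that
    by (auto simp: F_def)
  ultimately obtain z where z: "\<forall>s. s \<notin> F \<longrightarrow> z s = 0" "\<exists>s\<in>F. z s \<noteq> 0"
      "\<forall>j. (\<Sum>s\<in>{s\<in>F. b s = j}. z s) = 0" "(\<Sum>s\<in>F. z s *\<^sub>R g s) = 0"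
    using block_balanced_dependence[OF F(1)] by blast
  have "(\<Sum>s\<in>{s\<in>S. b s = j}. z s) = 0" for j
    using z(1,3) F fin by (subst sum.mono_neutral_right[where S = "{s\<in>F. b s = j}"]) auto
  moreover have "(\<Sum>s\<in>S. z s *\<^sub>R g s) = 0"
    using z(1,4) F fin by (subst sum.mono_neutral_right[where S = F]) auto
  moreover have "\<forall>s. z s \<noteq> 0 \<longrightarrow> s \<in> S \<and> 0 < x s \<and> x s < 1"
    using z(1) F(2) frac by blast
  ultimately show ?thesis
    using z(2) by blast
qed

lemma partial_rounding_along_direction:
  assumes supp: "\<forall>s. z s \<noteq> 0 \<longrightarrow> s \<in> S \<and> x s \<notin> {0,1}"
    and blocks: "\<forall>j. (\<Sum>s\<in>{s\<in>S. b s = j}. z s) = 0" and moment: "(\<Sum>s\<in>S. z s *\<^sub>R g s) = 0"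
    and cube: "\<forall>s\<in>S. 0 \<le> x s + \<tau> * z s \<and> x s + \<tau> * z s \<le> 1"
  shows "partial_rounding S b g x (\<lambda>s. x s + \<tau> * z s)"
  unfolding partial_rounding_def keeps_integral_coords_def
proof (intro conjI allI impI)
  show "\<forall>s\<in>S. 0 \<le> x s + \<tau> * z s \<and> x s + \<tau> * z s \<le> 1"
    by (rule cube)
  show "x s + \<tau> * z s = x s" if "x s \<in> {0,1}" for s
    using supp that by auto
  show "x s + \<tau> * z s = x s" if "s \<notin> S" for s
    using supp that by auto
  show "(\<Sum>s\<in>{s\<in>S. b s = j}. x s + \<tau> * z s) = (\<Sum>s\<in>{s\<in>S. b s = j}. x s)" for j
    using blocks by (simp add: sum.distrib flip: sum_distrib_left)
  show "(\<Sum>s\<in>S. (x s + \<tau> * z s) *\<^sub>R g s) = (\<Sum>s\<in>S. x s *\<^sub>R g s)"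
    using moment by (simp add: scaleR_add_left sum.distrib flip: scaleR_scaleR scaleR_sum_right)
qed

lemma partial_rounding_step:
  fixes g :: "'i \<Rightarrow> 'a::euclidean_space" and b :: "'i \<Rightarrow> 'j"
  assumes fin: "finite S" and x01: "\<forall>s\<in>S. 0 \<le> x s \<and> x s \<le> 1"
    and int: "\<forall>j. (\<Sum>s\<in>{s\<in>S. b s = j}. x s) \<in> \<int>"
    and many: "2 * dim (g ` S) < card {s\<in>S. x s \<notin> {0,1}}"
  shows "\<exists>y. partial_rounding S b g x y \<and> card {s\<in>S. y s \<notin> {0,1}} < card {s\<in>S. x s \<notin> {0,1}}"
proof -
  obtain z where supp: "\<forall>s. z s \<noteq> 0 \<longrightarrow> s \<in> S \<and> 0 < x s \<and> x s < 1" and nonzero: "\<exists>s. z s \<noteq> 0"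
    and blocks: "\<forall>j. (\<Sum>s\<in>{s\<in>S. b s = j}. z s) = 0" and moment: "(\<Sum>s\<in>S. z s *\<^sub>R g s) = 0"
    using balanced_direction_in_fractional_coords[OF fin x01 int many] by blast
  define Z where "Z = {s. z s \<noteq> 0}"
  have "finite Z"
    using fin supp by (auto simp: Z_def intro: finite_subset)
  moreover have "Z \<noteq> {}"
    using nonzero by (simp add: Z_def)
  moreover have "0 < x s \<and> x s < 1" "z s \<noteq> 0" if "s \<in> Z" for s
    using supp that by (auto simp: Z_def)
  ultimately obtain \<tau> s0 where \<tau>: "\<forall>s\<in>Z. 0 \<le> x s + \<tau> * z s \<and> x s + \<tau> * z s \<le> 1"
    and s0: "s0 \<in> Z" "x s0 + \<tau> * z s0 \<in> {0,1}"
    using exists_step_to_cube_boundary[of Z x z] by blast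
  have "\<forall>s\<in>S. 0 \<le> x s + \<tau> * z s \<and> x s + \<tau> * z s \<le> 1"
  proof
    fix s
    assume "s \<in> S"
    with \<tau> x01 show "0 \<le> x s + \<tau> * z s \<and> x s + \<tau> * z s \<le> 1"
      by (cases "s \<in> Z") (auto simp: Z_def)
  qed
  with supp blocks moment have "partial_rounding S b g x (\<lambda>s. x s + \<tau> * z s)"
    by (intro partial_rounding_along_direction) auto
  moreover have "card {s\<in>S. x s + \<tau> * z s \<notin> {0,1}} < card {s\<in>S. x s \<notin> {0,1}}"
  proof -
    have "{s\<in>S. x s + \<tau> * z s \<notin> {0,1}} \<subseteq> {s\<in>S. x s \<notin> {0,1}} - {s0}"
      using s0 supp by (auto simp: Z_def)
    moreover have "s0 \<in> {s\<in>S. x s \<notin> {0,1}}"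
      using s0(1) supp by (auto simp: Z_def)
    moreover have "finite {s\<in>S. x s \<notin> {0,1}}"
      using fin by simp
    ultimately show ?thesis
      by (meson card_Diff1_less card_mono finite_Diff order_le_less_trans)
  qed
  ultimately show ?thesis
    by blast
qed

lemma partial_rounding_few_fractional:
  fixes g :: "'i \<Rightarrow> 'a::euclidean_space" and b :: "'i \<Rightarrow> 'j"
  assumes fin: "finite S"
  shows "\<forall>s\<in>S. 0 \<le> x s \<and> x s \<le> 1 \<Longrightarrow> \<forall>j. (\<Sum>s\<in>{s\<in>S. b s = j}. x s) \<in> \<int> \<Longrightarrow>
    \<exists>y. partial_rounding S b g x y \<and> card {s\<in>S. y s \<notin> {0,1}} \<le> 2 * dim (g ` S)"
proof (induction "card {s\<in>S. x s \<notin> {0,1}}" arbitrary: x rule: less_induct)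
  case less
  show ?case
  proof (cases "card {s\<in>S. x s \<notin> {0,1}} \<le> 2 * dim (g ` S)")
    case True
    with less.prems show ?thesis
      by (auto intro: partial_rounding_refl)
  next
    case False
    then obtain y where y: "partial_rounding S b g x y"
        "card {s\<in>S. y s \<notin> {0,1}} < card {s\<in>S. x s \<notin> {0,1}}"
      using partial_rounding_step[OF fin less.prems] by force
    moreover have "\<forall>s\<in>S. 0 \<le> y s \<and> y s \<le> 1" "\<forall>j. (\<Sum>s\<in>{s\<in>S. b s = j}. y s) \<in> \<int>"
      using y(1) less.prems(2) by (auto simp: partial_rounding_def)
    ultimately show ?thesis
      using less.hyps partial_rounding_trans by blast
  qed
qed

lemma rounding_error_le_card_fractional:
  assumes nrm: "is_norm nrm" and fin: "finite S"
    and x01: "\<forall>s\<in>S. 0 \<le> x s \<and> x s \<le> 1" and u01: "\<forall>s\<in>S. 0 \<le> u s \<and> u s \<le> 1"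
    and keeps: "keeps_integral_coords x u" and g: "\<forall>s\<in>S. nrm (g s) \<le> 1"
  shows "nrm (\<Sum>s\<in>S. (u s - x s) *\<^sub>R g s) \<le> card {s\<in>S. x s \<notin> {0,1}}"
proof -
  let ?F = "{s\<in>S. x s \<notin> {0,1}}"
  have "(\<Sum>s\<in>S. (u s - x s) *\<^sub>R g s) = (\<Sum>s\<in>?F. (u s - x s) *\<^sub>R g s)"
    using fin keeps by (intro sum.mono_neutral_right) (auto simp: keeps_integral_coords_def)
  then have "nrm (\<Sum>s\<in>S. (u s - x s) *\<^sub>R g s) = nrm (\<Sum>s\<in>?F. (u s - x s) *\<^sub>R g s)"
    by (rule arg_cong)
  also have "\<dots> \<le> (\<Sum>s\<in>?F. nrm ((u s - x s) *\<^sub>R g s))"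
    by (rule is_norm_sum_le[OF nrm])
  also have "\<dots> \<le> (\<Sum>s\<in>?F. 1)"
  proof (rule sum_mono)
    fix s
    assume "s \<in> ?F"
    then have "0 \<le> x s" "x s \<le> 1" "0 \<le> u s" "u s \<le> 1" "nrm (g s) \<le> 1"
      using x01 u01 g by auto
    then have "\<bar>u s - x s\<bar> \<le> 1" "nrm (g s) \<le> 1"
      by auto
    moreover have "0 \<le> nrm (g s)"
      using nrm by (simp add: is_norm_def)
    ultimately
    show "nrm ((u s - x s) *\<^sub>R g s) \<le> 1"
      by (simp add: is_norm_scaleR[OF nrm] mult_le_one)
  qed
  finally show ?thesis
    by simp
qed

section \<open>Rounding the sets one after another\<close>

lemma sum_Sigma_fst_eq:
  "(\<Sum>s\<in>{s\<in>Sigma A B. fst s = j}. f s) = (if j \<in> A then (\<Sum>v\<in>B j. f (j, v)) else 0)"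
proof (cases "j \<in> A")
  case True
  then have "{s\<in>Sigma A B. fst s = j} = Pair j ` B j"
    by auto
  with True show ?thesis
    by (simp add: sum.reindex inj_on_def)
next
  case False
  then have "{s\<in>Sigma A B. fst s = j} = {}"
    by auto
  then have "(\<Sum>s\<in>{s\<in>Sigma A B. fst s = j}. f s) = 0"
    by (simp only: sum.empty)
  with False show ?thesis
    by simp
qed

lemma partial_rounding_Sigma_block_sums:
  assumes "partial_rounding (Sigma A B) fst g x y"
  shows "(\<Sum>v\<in>B i. y (i, v)) = (\<Sum>v\<in>B i. x (i, v))"
proof (cases "i \<in> A")
  case True
  from assms have "(\<Sum>s\<in>{s\<in>Sigma A B. fst s = i}. y s) = (\<Sum>s\<in>{s\<in>Sigma A B. fst s = i}. x s)"
    unfolding partial_rounding_def by blast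
  with True show ?thesis
    by (simp add: sum_Sigma_fst_eq)
next
  case False
  from assms have "\<forall>s. s \<notin> Sigma A B \<longrightarrow> y s = x s"
    unfolding partial_rounding_def by blast
  with False show ?thesis
    by (intro sum.cong) auto
qed

lemma sum_filter_eq_sum_scaleR:
  fixes f :: "'i \<Rightarrow> 'a::real_vector"
  assumes "finite A" "\<forall>v\<in>A. w v \<in> {0,1}"
  shows "(\<Sum>v\<in>{v\<in>A. w v = 1}. f v) = (\<Sum>v\<in>A. w v *\<^sub>R f v)"
proof -
  have "(\<Sum>v\<in>A. w v *\<^sub>R f v) = (\<Sum>v\<in>A. if w v = 1 then f v else 0)"
    using assms(2) by (intro sum.cong) auto
  with assms(1) show ?thesis
    by (simp add: sum.inter_filter)
qed

context
  fixes V :: "nat \<Rightarrow> 'a::euclidean_space set" and N :: nat and c :: "nat \<times> 'a \<Rightarrow> real"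
  assumes finite_V: "\<And>i. i \<in> {1..N} \<Longrightarrow> finite (V i)"
    and c_01: "\<And>s. s \<in> Sigma {1..N} V \<Longrightarrow> 0 \<le> c s \<and> c s \<le> 1"
    and c_block_sums_Ints: "\<And>i. i \<in> {1..N} \<Longrightarrow> (\<Sum>v\<in>V i. c (i, v)) \<in> \<int>"
begin

definition stage_rounding :: "nat \<Rightarrow> (nat \<times> 'a \<Rightarrow> real) \<Rightarrow> bool" where
  "stage_rounding n x \<longleftrightarrow>
     (\<forall>s\<in>Sigma {1..N} V. 0 \<le> x s \<and> x s \<le> 1) \<and>
     (\<forall>i\<in>{1..N}. (\<Sum>v\<in>V i. x (i, v)) = (\<Sum>v\<in>V i. c (i, v))) \<and>
     (\<Sum>s\<in>Sigma {1..n} V. x s *\<^sub>R snd s) = (\<Sum>s\<in>Sigma {1..n} V. c s *\<^sub>R snd s) \<and>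
     card {s\<in>Sigma {1..n} V. x s \<notin> {0,1}} \<le> 2 * DIM('a) \<and>
     (\<forall>s. s \<notin> Sigma {1..n} V \<longrightarrow> x s = c s)"

lemma stage_rounding_0: "stage_rounding 0 c"
  using c_01 by (simp add: stage_rounding_def)

lemma finite_Sigma_V: "m \<le> N \<Longrightarrow> finite (Sigma {1..m} V)"
  using finite_V by auto

lemma stage_rounding_block_sums_Ints:
  assumes "stage_rounding n x" "m \<le> N"
  shows "\<forall>j. (\<Sum>s\<in>{s\<in>Sigma {1..m} V. fst s = j}. x s) \<in> \<int>"
  using assms c_block_sums_Ints by (simp add: sum_Sigma_fst_eq stage_rounding_def)

lemma stage_rounding_next_moment:
  assumes n: "n < N" and x: "stage_rounding n x"
  shows "(\<Sum>s\<in>Sigma {1..Suc n} V. x s *\<^sub>R snd s) = (\<Sum>s\<in>Sigma {1..Suc n} V. c s *\<^sub>R snd s)"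
proof -
  let ?S = "Sigma {1..Suc n} V"
  have sub: "Sigma {1..n} V \<subseteq> ?S"
    by auto
  have "\<forall>s. s \<notin> Sigma {1..n} V \<longrightarrow> x s = c s"
    using x unfolding stage_rounding_def by blast
  then have "(\<Sum>s\<in>?S - Sigma {1..n} V. x s *\<^sub>R snd s) = (\<Sum>s\<in>?S - Sigma {1..n} V. c s *\<^sub>R snd s)"
    by (intro sum.cong refl) (metis DiffD2)
  moreover have "(\<Sum>s\<in>Sigma {1..n} V. x s *\<^sub>R snd s) = (\<Sum>s\<in>Sigma {1..n} V. c s *\<^sub>R snd s)"
    using x unfolding stage_rounding_def by blast
  ultimately show ?thesis
    using n by (simp only: sum.subset_diff[OF sub finite_Sigma_V])
qed

lemma stage_rounding_Suc:
  assumes n: "n < N" and x: "stage_rounding n x"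
  shows "\<exists>y. stage_rounding (Suc n) y \<and> keeps_integral_coords x y"
proof -
  let ?S = "Sigma {1..Suc n} V"
  have fin: "finite ?S"
    using n by (intro finite_Sigma_V) simp
  have x01: "\<forall>s\<in>Sigma {1..N} V. 0 \<le> x s \<and> x s \<le> 1"
    and x_off: "\<forall>s. s \<notin> Sigma {1..n} V \<longrightarrow> x s = c s"
    using x unfolding stage_rounding_def by blast+
  then have "\<forall>s\<in>?S. 0 \<le> x s \<and> x s \<le> 1"
    using n by auto
  moreover have "\<forall>j. (\<Sum>s\<in>{s\<in>?S. fst s = j}. x s) \<in> \<int>"
    using stage_rounding_block_sums_Ints[OF x, of "Suc n"] n by simp
  ultimately obtain y where y: "partial_rounding ?S fst snd x y"
      "card {s\<in>?S. y s \<notin> {0,1}} \<le> 2 * dim (snd ` ?S)"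
    using partial_rounding_few_fractional[OF fin] by blast
  have y01: "\<forall>s\<in>?S. 0 \<le> y s \<and> y s \<le> 1" and y_off: "\<forall>s. s \<notin> ?S \<longrightarrow> y s = x s"
    using y(1) unfolding partial_rounding_def by blast+
  have "(\<Sum>s\<in>?S. y s *\<^sub>R snd s) = (\<Sum>s\<in>?S. x s *\<^sub>R snd s)"
    using y(1) by (simp add: partial_rounding_def)
  also have "\<dots> = (\<Sum>s\<in>?S. c s *\<^sub>R snd s)"
    by (rule stage_rounding_next_moment[OF n x])
  finally have moment: "(\<Sum>s\<in>?S. y s *\<^sub>R snd s) = (\<Sum>s\<in>?S. c s *\<^sub>R snd s)" .
  have "stage_rounding (Suc n) y"
    unfolding stage_rounding_def
  proof (intro conjI ballI allI impI)
    show "0 \<le> y s" "y s \<le> 1" if "s \<in> Sigma {1..N} V" for s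
      using y01 x01 y_off that by (cases "s \<in> ?S"; auto)+
    show "(\<Sum>v\<in>V i. y (i, v)) = (\<Sum>v\<in>V i. c (i, v))" if "i \<in> {1..N}" for i
      using partial_rounding_Sigma_block_sums[OF y(1)] x that by (simp add: stage_rounding_def)
    show "card {s\<in>?S. y s \<notin> {0,1}} \<le> 2 * DIM('a)"
      using y(2) dim_subset_UNIV[of "snd ` ?S"] by linarith
    show "y s = c s" if "s \<notin> ?S" for s
    proof -
      have "s \<notin> Sigma {1..n} V"
        using that by auto
      with that show ?thesis
        using x_off y_off by metis
    qed
  qed (rule moment)
  with y(1) show ?thesis
    unfolding partial_rounding_def by blast
qed

lemma stage_rounding_prefix_error:
  assumes nrm: "is_norm nrm" and ball: "\<And>i. i \<in> {1..N} \<Longrightarrow> V i \<subseteq> {v. nrm v \<le> 1}"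
    and n: "n \<le> N" and x: "stage_rounding n x"
    and u01: "\<forall>s\<in>Sigma {1..n} V. 0 \<le> u s \<and> u s \<le> 1" and keeps: "keeps_integral_coords x u"
  shows "nrm (\<Sum>s\<in>Sigma {1..n} V. (u s - c s) *\<^sub>R snd s) \<le> 2 * DIM('a)"
proof -
  let ?S = "Sigma {1..n} V"
  have x01: "\<forall>s\<in>?S. 0 \<le> x s \<and> x s \<le> 1"
    and moment: "(\<Sum>s\<in>?S. x s *\<^sub>R snd s) = (\<Sum>s\<in>?S. c s *\<^sub>R snd s)"
    and few: "card {s\<in>?S. x s \<notin> {0,1}} \<le> 2 * DIM('a)"
    using x n unfolding stage_rounding_def by auto
  have "(\<Sum>s\<in>?S. (u s - c s) *\<^sub>R snd s) = (\<Sum>s\<in>?S. (u s - x s) *\<^sub>R snd s)"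
    using moment by (simp add: scaleR_diff_left sum_subtractf)
  moreover have "\<forall>s\<in>?S. nrm (snd s) \<le> 1"
  proof
    fix s
    assume "s \<in> ?S"
    with n have "fst s \<in> {1..N}" "snd s \<in> V (fst s)"
      by auto
    with ball show "nrm (snd s) \<le> 1"
      by blast
  qed
  then have "nrm (\<Sum>s\<in>?S. (u s - x s) *\<^sub>R snd s) \<le> card {s\<in>?S. x s \<notin> {0,1}}"
    using n by (intro rounding_error_le_card_fractional[OF nrm finite_Sigma_V x01 u01 keeps])
  ultimately show ?thesis
    using few by simp
qed

lemma stage_rounding_integral_rounding:
  assumes x: "stage_rounding n x"
  shows "\<exists>u. keeps_integral_coords x u \<and> (\<forall>s\<in>Sigma {1..N} V. u s \<in> {0,1}) \<and>
    (\<forall>i\<in>{1..N}. (\<Sum>v\<in>V i. u (i, v)) = (\<Sum>v\<in>V i. c (i, v)))"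
proof -
  let ?S = "Sigma {1..N} V"
  have x01: "\<forall>s\<in>?S. 0 \<le> x s \<and> x s \<le> 1" and x_blocks: "\<forall>i\<in>{1..N}. (\<Sum>v\<in>V i. x (i, v)) = (\<Sum>v\<in>V i. c (i, v))"
    using x unfolding stage_rounding_def by blast+
  \<comment> \<open>rounding against the zero vector constrains only the block sums\<close>
  obtain u where u: "partial_rounding ?S fst (\<lambda>_. 0::real) x u"
      "card {s\<in>?S. u s \<notin> {0,1}} \<le> 2 * dim ((\<lambda>_. 0::real) ` ?S)"
    using partial_rounding_few_fractional[OF finite_Sigma_V x01 stage_rounding_block_sums_Ints[OF x]]
    by blast
  have u01: "\<forall>s\<in>?S. 0 \<le> u s \<and> u s \<le> 1" and keeps: "keeps_integral_coords x u"
    using u(1) unfolding partial_rounding_def by blast+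
  have "dim ((\<lambda>_. 0::real) ` ?S) = 0"
    by auto
  with u(2) have "card {s\<in>?S. u s \<notin> {0,1}} = 0"
    by (simp only: mult_0_right le_zero_eq)
  then have "\<forall>s\<in>?S. u s \<in> {0,1}"
    using finite_Sigma_V[of N] by auto
  moreover have "\<forall>i\<in>{1..N}. (\<Sum>v\<in>V i. u (i, v)) = (\<Sum>v\<in>V i. c (i, v))"
    using partial_rounding_Sigma_block_sums[OF u(1)] x_blocks by simp
  ultimately show ?thesis
    using keeps by blast
qed

lemma stage_rounding_completion:
  assumes nrm: "is_norm nrm" and ball: "\<And>i. i \<in> {1..N} \<Longrightarrow> V i \<subseteq> {v. nrm v \<le> 1}"
  shows "n \<le> N \<Longrightarrow> stage_rounding n x \<Longrightarrow>
    \<exists>u. keeps_integral_coords x u \<and> (\<forall>s\<in>Sigma {1..N} V. u s \<in> {0,1}) \<and>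
        (\<forall>i\<in>{1..N}. (\<Sum>v\<in>V i. u (i, v)) = (\<Sum>v\<in>V i. c (i, v))) \<and>
        (\<forall>m\<in>{n..N}. nrm (\<Sum>s\<in>Sigma {1..m} V. (u s - c s) *\<^sub>R snd s) \<le> 2 * DIM('a))"
proof (induction n arbitrary: x rule: inc_induct)
  case base
  obtain u where u: "keeps_integral_coords x u" "\<forall>s\<in>Sigma {1..N} V. u s \<in> {0,1}"
      "\<forall>i\<in>{1..N}. (\<Sum>v\<in>V i. u (i, v)) = (\<Sum>v\<in>V i. c (i, v))"
    using stage_rounding_integral_rounding[OF base] by blast
  moreover have "\<forall>s\<in>Sigma {1..N} V. 0 \<le> u s \<and> u s \<le> 1"
    using u(2) by fastforce
  then have "nrm (\<Sum>s\<in>Sigma {1..N} V. (u s - c s) *\<^sub>R snd s) \<le> 2 * DIM('a)"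
    using stage_rounding_prefix_error[OF nrm ball order_refl base _ u(1)] by simp
  ultimately show ?case
    by auto
next
  case (step n)
  obtain y where y: "stage_rounding (Suc n) y" "keeps_integral_coords x y"
    using stage_rounding_Suc[OF step.hyps(2) step.prems] by blast
  obtain u where u: "keeps_integral_coords y u" "\<forall>s\<in>Sigma {1..N} V. u s \<in> {0,1}"
      "\<forall>i\<in>{1..N}. (\<Sum>v\<in>V i. u (i, v)) = (\<Sum>v\<in>V i. c (i, v))"
      "\<forall>m\<in>{Suc n..N}. nrm (\<Sum>s\<in>Sigma {1..m} V. (u s - c s) *\<^sub>R snd s) \<le> 2 * DIM('a)"
    using step.IH[OF y(1)] by blast
  have keeps: "keeps_integral_coords x u"
    using keeps_integral_coords_trans[OF y(2) u(1)] .
  have "\<forall>s\<in>Sigma {1..n} V. 0 \<le> u s \<and> u s \<le> 1"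
    using u(2) step.hyps(2) by fastforce
  then have "nrm (\<Sum>s\<in>Sigma {1..n} V. (u s - c s) *\<^sub>R snd s) \<le> 2 * DIM('a)"
    using stage_rounding_prefix_error[OF nrm ball _ step.prems _ keeps] step.hyps(2) by simp
  with u(4) have "\<forall>m\<in>{n..N}. nrm (\<Sum>s\<in>Sigma {1..m} V. (u s - c s) *\<^sub>R snd s) \<le> 2 * DIM('a)"
    by (metis Suc_leI atLeastAtMost_iff le_neq_implies_less)
  with keeps u(2,3) show ?case
    by blast
qed

theorem prefix_rounding_exists:
  assumes nrm: "is_norm nrm" and ball: "\<And>i. i \<in> {1..N} \<Longrightarrow> V i \<subseteq> {v. nrm v \<le> 1}"
  shows "\<exists>U. (\<forall>i\<in>{1..N}. U i \<subseteq> V i \<and> real (card (U i)) = (\<Sum>v\<in>V i. c (i, v))) \<and>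
    (\<forall>n\<in>{1..N}. nrm (\<Sum>i\<in>{1..n}. (\<Sum>v\<in>U i. v) - (\<Sum>v\<in>V i. c (i, v) *\<^sub>R v)) \<le> 2 * DIM('a))"
proof -
  obtain u where u01: "\<forall>s\<in>Sigma {1..N} V. u s \<in> {0,1}"
    and blocks: "\<forall>i\<in>{1..N}. (\<Sum>v\<in>V i. u (i, v)) = (\<Sum>v\<in>V i. c (i, v))"
    and error: "\<forall>m\<in>{0..N}. nrm (\<Sum>s\<in>Sigma {1..m} V. (u s - c s) *\<^sub>R snd s) \<le> 2 * DIM('a)"
    using stage_rounding_completion[OF nrm ball _ stage_rounding_0] by blast
  define U where "U i = {v\<in>V i. u (i, v) = 1}" for i
  have U_sum: "(\<Sum>v\<in>U i. v) = (\<Sum>v\<in>V i. u (i, v) *\<^sub>R v)" if "i \<in> {1..N}" for i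
    unfolding U_def using finite_V[OF that] u01 that by (intro sum_filter_eq_sum_scaleR) auto
  show ?thesis
  proof (intro exI[of _ U] ballI conjI)
    fix i
    assume i: "i \<in> {1..N}"
    show "U i \<subseteq> V i"
      by (auto simp: U_def)
    have "real (card (U i)) = (\<Sum>v\<in>V i. u (i, v) *\<^sub>R 1)"
      unfolding U_def using finite_V[OF i] u01 i
      by (subst sum_filter_eq_sum_scaleR[symmetric]) auto
    with blocks i show "real (card (U i)) = (\<Sum>v\<in>V i. c (i, v))"
      by simp
  next
    fix n
    assume n: "n \<in> {1..N}"
    have "(\<Sum>i\<in>{1..n}. (\<Sum>v\<in>U i. v) - (\<Sum>v\<in>V i. c (i, v) *\<^sub>R v))
        = (\<Sum>i\<in>{1..n}. \<Sum>v\<in>V i. (u (i, v) - c (i, v)) *\<^sub>R v)"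
      using n U_sum by (intro sum.cong) (auto simp: scaleR_diff_left sum_subtractf)
    also have "\<dots> = (\<Sum>s\<in>Sigma {1..n} V. (u s - c s) *\<^sub>R snd s)"
      using n finite_V by (subst sum.Sigma) (auto simp: split_def)
    finally show "nrm (\<Sum>i\<in>{1..n}. (\<Sum>v\<in>U i. v) - (\<Sum>v\<in>V i. c (i, v) *\<^sub>R v)) \<le> 2 * DIM('a)"
      using error n by simp
  qed
qed

end

theorem lemma5:
  fixes nrm :: "real ^ 'd \<Rightarrow> real"
    and V :: "nat \<Rightarrow> (real ^ 'd) set"
    and N r k :: nat
  assumes "is_norm nrm"
    and "N \<ge> 1"
    and "r \<ge> 2"
    and "\<And>i. i \<in> {1..N} \<Longrightarrow> finite (V i)"
    and "\<And>i. i \<in> {1..N} \<Longrightarrow> V i \<subseteq> {v. nrm v \<le> 1}"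
    and "\<And>i. i \<in> {1..N} \<Longrightarrow> card (V i) \<ge> r"
    and "k \<in> {1..r}"
  shows "\<exists>U :: nat \<Rightarrow> (real ^ 'd) set.
           (\<forall>i \<in> {1..N}. U i \<subseteq> V i \<and> card (U i) = k) \<and>
           (MAX n \<in> {1..N}. nrm (\<Sum>i \<in> {1..n}.
               (\<Sum>v \<in> U i. v) - (real k / real (card (V i))) *\<^sub>R (\<Sum>v \<in> V i. v)))
             \<le> 2 * real CARD('d)"
proof -
  define c where "c s = real k / real (card (V (fst s)))" for s :: "nat \<times> (real ^ 'd)"
  have k_le: "k \<le> card (V i)" and card_pos: "0 < card (V i)" if "i \<in> {1..N}" for i
    using assms(3,7) assms(6)[OF that] by simp_all
  have c_blocks: "(\<Sum>v\<in>V i. c (i, v)) = real k" if "i \<in> {1..N}" for i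
    using card_pos[OF that] by (simp add: c_def)
  then have c_blocks_Ints: "(\<Sum>v\<in>V i. c (i, v)) \<in> \<int>" if "i \<in> {1..N}" for i
    using that by simp
  have c_01: "0 \<le> c s \<and> c s \<le> 1" if "s \<in> Sigma {1..N} V" for s
    using k_le card_pos that by (auto simp: c_def divide_le_eq_1)
  obtain U where U: "\<forall>i\<in>{1..N}. U i \<subseteq> V i \<and> real (card (U i)) = (\<Sum>v\<in>V i. c (i, v))"
    and bound: "\<forall>n\<in>{1..N}. nrm (\<Sum>i\<in>{1..n}. (\<Sum>v\<in>U i. v) - (\<Sum>v\<in>V i. c (i, v) *\<^sub>R v))
                  \<le> 2 * DIM(real ^ 'd)"
    using prefix_rounding_exists[OF assms(4) c_01 c_blocks_Ints assms(1,5)] by blast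
  have "(\<Sum>v\<in>V i. c (i, v) *\<^sub>R v) = (real k / real (card (V i))) *\<^sub>R (\<Sum>v\<in>V i. v)" for i
    by (simp add: c_def scaleR_sum_right)
  with bound have "\<forall>n\<in>{1..N}. nrm (\<Sum>i\<in>{1..n}. (\<Sum>v\<in>U i. v) - (real k / real (card (V i))) *\<^sub>R (\<Sum>v\<in>V i. v))
                  \<le> 2 * real CARD('d)"
    by simp
  moreover have "\<forall>i\<in>{1..N}. U i \<subseteq> V i \<and> card (U i) = k"
    using U c_blocks by simp
  ultimately show ?thesis
    using assms(2) by (intro exI[of _ U] conjI) (simp_all add: Max_le_iff)
qed

end
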